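(* Let $A$ be a bounded set in a Banach space $X$. Then $\gamma_0(A)\le\operatorname{bs}(A)$.
   Context: $\gamma_0(A)=\sup\{|\lim_m\lim_n x_m^*(x_n)| : (x_m^* )\text{ a sequence in }B_{X^*}\text{ weak}^*\text{ converging to }0,\ (x_n)\text{ a sequence in }A,\text{ and all the involved limits exist}\}$, where $B_{X^*}$ is the closed unit ball of $X^*$. For a bounded sequence $(x_k)$: $\operatorname{ca}(x_k)=\inf_{n}\sup\{\|x_k-x_l\|: k,l\ge n\}$, $\operatorname{cca}(x_k)=\operatorname{ca}(\frac1k\sum_{i=1}^k x_i)$, $\widetilde{\operatorname{cca}}(x_k)=\inf\{\operatorname{cca}(x_{k_n}) : (x_{k_n})\text{ a subsequence of }(x_k)\}$, and $\operatorname{bs}(A)=\sup\{\widetilde{\operatorname{cca}}(x_k): (x_k)\subset A\}$. *)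

theory Defs
  imports "HOL-Analysis.Analysis"
begin

text \<open>Sequences are indexed by nat starting at 0 (the paper indexes from 1).\<close>

definition ca :: "(nat \<Rightarrow> 'a::real_normed_vector) \<Rightarrow> real" where
  "ca x = (INF n. SUP p \<in> {n..} \<times> {n..}. norm (x (fst p) - x (snd p)))"

definition cesaro :: "(nat \<Rightarrow> 'a::real_normed_vector) \<Rightarrow> nat \<Rightarrow> 'a" where
  "cesaro x k = (1 / real (Suc k)) *\<^sub>R (\<Sum>i\<le>k. x i)"

definition cca :: "(nat \<Rightarrow> 'a::real_normed_vector) \<Rightarrow> real" where
  "cca x = ca (cesaro x)"

definition cca_tilde :: "(nat \<Rightarrow> 'a::real_normed_vector) \<Rightarrow> real" where
  "cca_tilde x = (INF r \<in> {r. strict_mono r}. cca (x \<circ> r))"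

definition bs :: "'a::real_normed_vector set \<Rightarrow> real" where
  "bs A = (SUP x \<in> {x. \<forall>k. x k \<in> A}. cca_tilde x)"

definition gamma0 :: "'a::real_normed_vector set \<Rightarrow> real" where
  "gamma0 A = Sup {\<bar>L\<bar> | L. \<exists>(f :: nat \<Rightarrow> 'a \<Rightarrow>\<^sub>L real) (x :: nat \<Rightarrow> 'a) (M :: nat \<Rightarrow> real).
      (\<forall>m. norm (f m) \<le> 1) \<and> (\<forall>y. (\<lambda>m. blinfun_apply (f m) y) \<longlonglongrightarrow> 0) \<and>
      (\<forall>n. x n \<in> A) \<and> (\<forall>m. (\<lambda>n. blinfun_apply (f m) (x n)) \<longlonglongrightarrow> M m) \<and> M \<longlonglongrightarrow> L}"

end

theory Submission
  imports Defs
begin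

text \<open>Given weak* null functionals \<open>f\<^sub>m\<close> in the dual ball and \<open>x\<^sub>n \<in> A\<close> with
  \<open>lim\<^sub>m lim\<^sub>n f\<^sub>m(x\<^sub>n) = L\<close>, a diagonal choice yields a subsequence \<open>y\<close> of \<open>x\<close> and functionals
  \<open>g\<^sub>k = f\<^sub>m\<^sub>k\<close> with \<open>g\<^sub>k(y\<^sub>j) \<approx> 0\<close> for \<open>j < k\<close> and \<open>g\<^sub>k(y\<^sub>j) \<approx> L\<close> for \<open>j \<ge> k\<close>. This pattern
  passes to every further subsequence, and applying \<open>g\<^sub>k\<close> to the Cesaro means shows that the
  mean of the first \<open>p\<close> terms and that of the first \<open>q \<gg> p\<close> terms are roughly \<open>\<bar>L\<bar>\<close> apart.
  Hence every subsequence of \<open>y\<close> has Cesaro oscillation about \<open>\<bar>L\<bar>\<close>, so \<open>\<bar>L\<bar> \<le> bs A\<close>.\<close>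

lemma norm_cesaro_le:
  fixes x :: "nat \<Rightarrow> 'a::real_normed_vector"
  assumes "\<And>k. norm (x k) \<le> B"
  shows "norm (cesaro x k) \<le> B"
proof -
  have "norm (\<Sum>i\<le>k. x i) \<le> (\<Sum>i\<le>k. B)"
    by (rule order_trans[OF norm_sum sum_mono]) (use assms in auto)
  also have "\<dots> = real (Suc k) * B" by simp
  finally show ?thesis
    unfolding cesaro_def by (simp add: field_simps)
qed

lemma norm_diff_le_twice_bound:
  fixes c :: "nat \<Rightarrow> 'a::real_normed_vector"
  assumes "\<And>k. norm (c k) \<le> B"
  shows "norm (c p - c q) \<le> 2 * B"
  using norm_triangle_ineq4[of "c p" "c q"] assms[of p] assms[of q] by linarith

lemma bdd_above_norm_diff:
  fixes c :: "nat \<Rightarrow> 'a::real_normed_vector"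
  assumes "\<And>k. norm (c k) \<le> B"
  shows "bdd_above ((\<lambda>p. norm (c (fst p) - c (snd p))) ` S)"
  by (rule bdd_aboveI2) (rule norm_diff_le_twice_bound[OF assms])

lemma ca_ge:
  fixes c :: "nat \<Rightarrow> 'a::real_normed_vector"
  assumes "\<And>k. norm (c k) \<le> B"
    and "\<And>n. \<exists>p\<ge>n. \<exists>q\<ge>n. t \<le> norm (c p - c q)"
  shows "t \<le> ca c"
  unfolding ca_def
proof (rule cINF_greatest)
  fix n
  obtain p q where "p \<ge> n" "q \<ge> n" "t \<le> norm (c p - c q)"
    using assms(2) by blast
  then show "t \<le> (SUP p\<in>{n..} \<times> {n..}. norm (c (fst p) - c (snd p)))"
    by (intro cSUP_upper2[of _ _ "(p, q)"] bdd_above_norm_diff[OF assms(1)]) auto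
qed simp

lemma ca_nonneg:
  fixes c :: "nat \<Rightarrow> 'a::real_normed_vector"
  assumes "\<And>k. norm (c k) \<le> B"
  shows "0 \<le> ca c"
  by (rule ca_ge[OF assms]) auto

lemma ca_le_twice_bound:
  fixes c :: "nat \<Rightarrow> 'a::real_normed_vector"
  assumes "\<And>k. norm (c k) \<le> B"
  shows "ca c \<le> 2 * B"
proof -
  have "ca c \<le> (SUP p\<in>{0..} \<times> {0..}. norm (c (fst p) - c (snd p)))"
    unfolding ca_def
  proof (rule cINF_lower)
    show "bdd_below (range (\<lambda>n. SUP p\<in>{n..} \<times> {n..}. norm (c (fst p) - c (snd p))))"
      by (rule bdd_belowI2[of _ 0], rule cSUP_upper2[of _ _ "(n, n)" for n])
        (auto intro: bdd_above_norm_diff[OF assms])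
  qed simp
  also have "\<dots> \<le> 2 * B"
    by (rule cSUP_least) (auto intro: norm_diff_le_twice_bound[OF assms])
  finally show ?thesis .
qed

lemma cca_tilde_le_cca:
  fixes x :: "nat \<Rightarrow> 'a::real_normed_vector"
  assumes "\<And>k. norm (x k) \<le> B"
  shows "cca_tilde x \<le> cca x"
proof -
  have "cca_tilde x \<le> cca (x \<circ> id)"
    unfolding cca_tilde_def
  proof (rule cINF_lower)
    show "bdd_below ((\<lambda>r. cca (x \<circ> r)) ` {r. strict_mono r})"
      unfolding cca_def
      by (rule bdd_belowI2[of _ 0], rule ca_nonneg[where B=B], rule norm_cesaro_le) (simp add: assms)
  qed (simp add: strict_mono_def)
  then show ?thesis by simp
qed

text \<open>Apply \<open>g\<close> to both means: the \<open>p\<close>-th is sent near \<open>0\<close>, the \<open>q\<close>-th near \<open>L\<close> up to the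
  weight \<open>(p + 1) / (q + 1)\<close> of its initial block.\<close>
lemma norm_cesaro_diff_ge:
  fixes g :: "'a::real_normed_vector \<Rightarrow>\<^sub>L real" and y :: "nat \<Rightarrow> 'a"
  assumes g: "norm g \<le> 1" and "p < q"
    and small: "\<And>i. i \<le> p \<Longrightarrow> \<bar>g (y i)\<bar> \<le> d"
    and near: "\<And>i. p < i \<Longrightarrow> i \<le> q \<Longrightarrow> \<bar>g (y i) - L\<bar> \<le> d"
  shows "\<bar>L\<bar> - 2 * d - real (Suc p) * \<bar>L\<bar> / real (Suc q) \<le> norm (cesaro y q - cesaro y p)"
proof -
  have g_cesaro: "g (cesaro y k) = (\<Sum>i\<le>k. g (y i)) / real (Suc k)" for k
    unfolding cesaro_def by (simp add: blinfun.scaleR_right blinfun.sum_right)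
  define S1 where "S1 = (\<Sum>i\<le>p. g (y i))"
  define S2 where "S2 = (\<Sum>i\<in>{p<..q}. g (y i))"
  have split: "{..q} = {..p} \<union> {p<..q}" using \<open>p < q\<close> by auto
  have sum_q: "(\<Sum>i\<le>q. g (y i)) = S1 + S2"
    unfolding S1_def S2_def split by (subst sum.union_disjoint) auto
  have "\<bar>S1\<bar> \<le> (\<Sum>i\<le>p. d)"
    unfolding S1_def by (rule order_trans[OF sum_abs sum_mono]) (use small in auto)
  then have S1: "\<bar>S1\<bar> \<le> real (Suc p) * d" by simp
  have "\<bar>S2 - (\<Sum>i\<in>{p<..q}. L)\<bar> \<le> (\<Sum>i\<in>{p<..q}. d)"
    unfolding S2_def sum_subtractf[symmetric]
    by (rule order_trans[OF sum_abs sum_mono]) (use near in auto)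
  then have S2: "\<bar>S2 - (real (Suc q) - real (Suc p)) * L\<bar> \<le> (real (Suc q) - real (Suc p)) * d"
    using \<open>p < q\<close> by (simp add: of_nat_diff)
  have mean_p: "\<bar>g (cesaro y p)\<bar> \<le> d"
    using S1 unfolding g_cesaro S1_def[symmetric] by (simp add: divide_le_eq mult.commute)
  have "\<bar>S1 + S2 - real (Suc q) * L\<bar> \<le> real (Suc q) * d + real (Suc p) * \<bar>L\<bar>"
    using S1 S2 abs_mult[of "real (Suc p)" L] by (auto simp: abs_le_iff algebra_simps)
  then have mean_q: "\<bar>g (cesaro y q) - L\<bar> \<le> d + real (Suc p) * \<bar>L\<bar> / real (Suc q)"
    unfolding g_cesaro sum_q by (simp add: field_simps del: of_nat_Suc)
  have "\<bar>g (cesaro y q - cesaro y p)\<bar> \<le> norm g * norm (cesaro y q - cesaro y p)"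
    by (metis norm_blinfun real_norm_def)
  also have "\<dots> \<le> norm (cesaro y q - cesaro y p)"
    using g by (simp add: mult_left_le_one_le)
  finally have "\<bar>g (cesaro y q) - g (cesaro y p)\<bar> \<le> norm (cesaro y q - cesaro y p)"
    by (simp add: blinfun.diff_right)
  then show ?thesis using mean_p mean_q by linarith
qed

text \<open>The interleaving behind the whole argument: \<open>mm k\<close> is chosen after \<open>nn 0, \<dots>, nn (k - 1)\<close>
  (columns tend to \<open>0\<close>), and \<open>nn k\<close> after \<open>mm k\<close> (row \<open>mm k\<close> has settled near its limit).\<close>
lemma double_sequence_interleaving:
  fixes a :: "nat \<Rightarrow> nat \<Rightarrow> real"
  assumes columns: "\<And>n. (\<lambda>m. a m n) \<longlonglongrightarrow> 0"
    and rows: "\<And>m. (\<lambda>n. a m n) \<longlonglongrightarrow> M m"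
    and "M \<longlonglongrightarrow> L" and "0 < d"
  obtains nn mm :: "nat \<Rightarrow> nat" where "strict_mono nn"
    and "\<And>j k. j < k \<Longrightarrow> \<bar>a (mm k) (nn j)\<bar> \<le> d"
    and "\<And>j k. k \<le> j \<Longrightarrow> \<bar>a (mm k) (nn j) - L\<bar> \<le> d"
proof -
  have "\<forall>\<^sub>F m in sequentially. \<bar>M m - L\<bar> < d / 2 \<and> (\<forall>n\<in>{..b}. \<bar>a m n\<bar> \<le> d)" for b
  proof (rule eventually_conj)
    show "\<forall>\<^sub>F m in sequentially. \<bar>M m - L\<bar> < d / 2"
      using tendstoD[OF \<open>M \<longlonglongrightarrow> L\<close>, of "d / 2"] \<open>0 < d\<close> by (simp add: dist_real_def)
    show "\<forall>\<^sub>F m in sequentially. \<forall>n\<in>{..b}. \<bar>a m n\<bar> \<le> d"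
    proof (intro eventually_ball_finite ballI)
      fix n show "\<forall>\<^sub>F m in sequentially. \<bar>a m n\<bar> \<le> d"
        using tendstoD[OF columns[of n] \<open>0 < d\<close>] by (rule eventually_mono) simp
    qed simp
  qed
  then have "\<forall>b. \<exists>m. \<bar>M m - L\<bar> < d / 2 \<and> (\<forall>n\<in>{..b}. \<bar>a m n\<bar> \<le> d)"
    using eventually_happens'[OF sequentially_bot] by blast
  then obtain mf where mf_limit: "\<And>b. \<bar>M (mf b) - L\<bar> < d / 2"
    and mf_columns: "\<And>b n. n \<le> b \<Longrightarrow> \<bar>a (mf b) n\<bar> \<le> d"
    unfolding choice_iff atMost_iff by blast
  obtain Nf where Nf: "\<And>m n. Nf m \<le> n \<Longrightarrow> \<bar>a m n - M m\<bar> < d / 2"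
  proof -
    have "\<forall>m. \<exists>N. \<forall>n\<ge>N. \<bar>a m n - M m\<bar> < d / 2"
      using LIMSEQ_D[OF rows, of "d / 2"] \<open>0 < d\<close> by simp
    then show thesis using that unfolding choice_iff by blast
  qed
  define nn where "nn = rec_nat (Nf (mf 0)) (\<lambda>k v. max (Suc v) (Nf (mf v)))"
  define mm where "mm k = (case k of 0 \<Rightarrow> mf 0 | Suc j \<Rightarrow> mf (nn j))" for k
  have nn_Suc: "nn (Suc k) = max (Suc (nn k)) (Nf (mm (Suc k)))" for k
    by (simp add: nn_def mm_def)
  have mono: "strict_mono nn"
    unfolding strict_mono_Suc_iff nn_Suc by (simp add: less_max_iff_disj)
  have Nf_mm: "Nf (mm k) \<le> nn k" for k
    by (cases k) (simp_all add: nn_Suc, simp add: nn_def mm_def)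
  show thesis
  proof
    show "strict_mono nn" by (fact mono)
  next
    fix j k :: nat assume "j < k"
    then obtain i where "k = Suc i" "j \<le> i" by (cases k) auto
    then show "\<bar>a (mm k) (nn j)\<bar> \<le> d"
      using mf_columns mono by (simp add: mm_def strict_mono_less_eq)
  next
    fix j k :: nat assume "k \<le> j"
    then have "Nf (mm k) \<le> nn j"
      using Nf_mm[of k] mono by (meson order_trans strict_mono_less_eq)
    then have "\<bar>a (mm k) (nn j) - M (mm k)\<bar> < d / 2" by (rule Nf)
    moreover have "\<bar>M (mm k) - L\<bar> < d / 2"
      using mf_limit by (simp add: mm_def split: nat.split)
    ultimately show "\<bar>a (mm k) (nn j) - L\<bar> \<le> d"
      by linarith
  qed
qed

lemma cca_ge_of_separating_functionals:
  fixes y :: "nat \<Rightarrow> 'a::real_normed_vector"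
  assumes bound: "\<And>k. norm (y k) \<le> B" and "0 < d"
    and separating: "\<And>p. \<exists>(g :: 'a \<Rightarrow>\<^sub>L real). norm g \<le> 1 \<and>
      (\<forall>i\<le>p. \<bar>blinfun_apply g (y i)\<bar> \<le> d) \<and> (\<forall>i>p. \<bar>blinfun_apply g (y i) - L\<bar> \<le> d)"
  shows "\<bar>L\<bar> - 3 * d \<le> cca y"
  unfolding cca_def
proof (rule ca_ge[where B = B])
  show "norm (cesaro y k) \<le> B" for k
    by (rule norm_cesaro_le[OF bound])
next
  fix p
  obtain g :: "'a \<Rightarrow>\<^sub>L real" where g: "norm g \<le> 1"
    "\<And>i. i \<le> p \<Longrightarrow> \<bar>blinfun_apply g (y i)\<bar> \<le> d" "\<And>i. p < i \<Longrightarrow> \<bar>blinfun_apply g (y i) - L\<bar> \<le> d"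
    using separating[of p] by blast
  have "(\<lambda>q. real (Suc p) * \<bar>L\<bar> / real (Suc q)) \<longlonglongrightarrow> 0"
    by (rule LIMSEQ_Suc[OF lim_const_over_n])
  then have "\<forall>\<^sub>F q in sequentially. real (Suc p) * \<bar>L\<bar> / real (Suc q) < d"
    using tendstoD \<open>0 < d\<close> by (fastforce simp: dist_real_def elim: eventually_mono)
  moreover have "\<forall>\<^sub>F q in sequentially. p < q"
    by (rule eventually_gt_at_top)
  ultimately obtain q where q: "p < q" "real (Suc p) * \<bar>L\<bar> / real (Suc q) < d"
    using eventually_happens'[OF sequentially_bot eventually_conj] by blast
  have "\<bar>L\<bar> - 2 * d - real (Suc p) * \<bar>L\<bar> / real (Suc q) \<le> norm (cesaro y q - cesaro y p)"
    by (rule norm_cesaro_diff_ge[OF g(1) q(1) g(2) g(3)])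
  then have "\<bar>L\<bar> - 3 * d \<le> norm (cesaro y q - cesaro y p)"
    using q(2) by linarith
  with q(1) show "\<exists>p'\<ge>p. \<exists>q'\<ge>p. \<bar>L\<bar> - 3 * d \<le> norm (cesaro y p' - cesaro y q')"
    by (metis less_imp_le norm_minus_commute order_refl)
qed

text \<open>The hypothesis survives passing to subsequences: for \<open>y \<circ> r\<close> and index \<open>p\<close> use the
  functional attached to \<open>k = r (Suc p)\<close>.\<close>
lemma cca_tilde_ge_of_separating_functionals:
  fixes y :: "nat \<Rightarrow> 'a::real_normed_vector"
  assumes bound: "\<And>k. norm (y k) \<le> B" and "0 < d"
    and separating: "\<And>k. \<exists>(g :: 'a \<Rightarrow>\<^sub>L real). norm g \<le> 1 \<and>
      (\<forall>j<k. \<bar>blinfun_apply g (y j)\<bar> \<le> d) \<and> (\<forall>j\<ge>k. \<bar>blinfun_apply g (y j) - L\<bar> \<le> d)"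
  shows "\<bar>L\<bar> - 3 * d \<le> cca_tilde y"
  unfolding cca_tilde_def
proof (rule cINF_greatest)
  show "{r :: nat \<Rightarrow> nat. strict_mono r} \<noteq> {}"
    using strict_mono_id by blast
next
  fix r :: "nat \<Rightarrow> nat" assume "r \<in> {r. strict_mono r}"
  then have r: "strict_mono r" by simp
  show "\<bar>L\<bar> - 3 * d \<le> cca (y \<circ> r)"
  proof (rule cca_ge_of_separating_functionals[where B = B])
    show "norm ((y \<circ> r) k) \<le> B" for k
      by (simp add: bound)
    show "0 < d" by fact
    fix p
    obtain g :: "'a \<Rightarrow>\<^sub>L real" where g: "norm g \<le> 1"
      "\<And>j. j < r (Suc p) \<Longrightarrow> \<bar>blinfun_apply g (y j)\<bar> \<le> d"
      "\<And>j. r (Suc p) \<le> j \<Longrightarrow> \<bar>blinfun_apply g (y j) - L\<bar> \<le> d"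
      using separating[of "r (Suc p)"] by blast
    have "\<bar>blinfun_apply g (y (r i))\<bar> \<le> d" if "i \<le> p" for i
      by (rule g(2)) (use that r in \<open>simp add: strict_mono_less\<close>)
    moreover have "\<bar>blinfun_apply g (y (r i)) - L\<bar> \<le> d" if "p < i" for i
      by (rule g(3)) (use that r in \<open>simp add: strict_mono_less_eq\<close>)
    ultimately show "\<exists>(g :: 'a \<Rightarrow>\<^sub>L real). norm g \<le> 1 \<and>
      (\<forall>i\<le>p. \<bar>blinfun_apply g ((y \<circ> r) i)\<bar> \<le> d) \<and> (\<forall>i>p. \<bar>blinfun_apply g ((y \<circ> r) i) - L\<bar> \<le> d)"
      using g(1) by (intro exI[of _ g]) simp
  qed
qed

lemma bdd_above_cca_tilde:
  fixes A :: "'a::real_normed_vector set"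
  assumes "bounded A"
  shows "bdd_above (cca_tilde ` {x. \<forall>k. x k \<in> A})"
proof -
  obtain B where B: "\<And>a. a \<in> A \<Longrightarrow> norm a \<le> B"
    using assms bounded_iff by blast
  have "cca_tilde x \<le> 2 * B" if "\<forall>k. x k \<in> A" for x :: "nat \<Rightarrow> 'a"
  proof -
    have bound: "norm (x k) \<le> B" for k using that B by blast
    have "cca_tilde x \<le> cca x" by (rule cca_tilde_le_cca[OF bound])
    also have "\<dots> \<le> 2 * B"
      unfolding cca_def by (rule ca_le_twice_bound, rule norm_cesaro_le[OF bound])
    finally show ?thesis .
  qed
  then show ?thesis by (intro bdd_aboveI2[where M = "2 * B"]) simp
qed

lemma iterated_limit_le_bs:
  fixes A :: "'a::real_normed_vector set"
    and f :: "nat \<Rightarrow> 'a \<Rightarrow>\<^sub>L real" and x :: "nat \<Rightarrow> 'a"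
  assumes "bounded A"
    and f_ball: "\<forall>m. norm (f m) \<le> 1" and f_weak_star: "\<forall>z. (\<lambda>m. f m z) \<longlonglongrightarrow> 0"
    and xA: "\<forall>n. x n \<in> A" and rows: "\<forall>m. (\<lambda>n. f m (x n)) \<longlonglongrightarrow> M m" and "M \<longlonglongrightarrow> L"
  shows "\<bar>L\<bar> \<le> bs A"
proof (rule field_le_epsilon)
  fix e :: real assume "0 < e"
  then have "0 < e / 3" by simp
  obtain B where B: "\<And>a. a \<in> A \<Longrightarrow> norm a \<le> B"
    using \<open>bounded A\<close> bounded_iff by blast
  obtain nn mm :: "nat \<Rightarrow> nat" where "strict_mono nn"
    and small: "\<And>j k. j < k \<Longrightarrow> \<bar>f (mm k) (x (nn j))\<bar> \<le> e / 3"
    and near: "\<And>j k. k \<le> j \<Longrightarrow> \<bar>f (mm k) (x (nn j)) - L\<bar> \<le> e / 3"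
    by (rule double_sequence_interleaving[of "\<lambda>m n. f m (x n)", OF _ _ \<open>M \<longlonglongrightarrow> L\<close> \<open>0 < e / 3\<close>])
      (use f_weak_star rows in auto)
  have "\<exists>(g :: 'a \<Rightarrow>\<^sub>L real). norm g \<le> 1 \<and> (\<forall>j<k. \<bar>blinfun_apply g ((x \<circ> nn) j)\<bar> \<le> e / 3) \<and>
      (\<forall>j\<ge>k. \<bar>blinfun_apply g ((x \<circ> nn) j) - L\<bar> \<le> e / 3)" for k
    using f_ball small near by (intro exI[of _ "f (mm k)"]) simp
  then have "\<bar>L\<bar> - 3 * (e / 3) \<le> cca_tilde (x \<circ> nn)"
    using B xA by (intro cca_tilde_ge_of_separating_functionals[where B = B] \<open>0 < e / 3\<close>) auto
  also have "\<dots> \<le> bs A"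
    unfolding bs_def using xA by (intro cSUP_upper bdd_above_cca_tilde \<open>bounded A\<close>) auto
  finally show "\<bar>L\<bar> \<le> bs A + e" by simp
qed

theorem lemma3p5:
  fixes A :: "'a::banach set"
  assumes "bounded A"
  shows "gamma0 A \<le> bs A"
proof (cases "A = {}")
  case True
  \<comment> \<open>both sides are \<open>Sup {}\<close>\<close>
  then show ?thesis by (simp add: gamma0_def bs_def)
next
  case False
  then obtain a where "a \<in> A" by blast
  then have "\<bar>0\<bar> \<in> {\<bar>L\<bar> | L. \<exists>(f :: nat \<Rightarrow> 'a \<Rightarrow>\<^sub>L real) (x :: nat \<Rightarrow> 'a) (M :: nat \<Rightarrow> real).
      (\<forall>m. norm (f m) \<le> 1) \<and> (\<forall>y. (\<lambda>m. blinfun_apply (f m) y) \<longlonglongrightarrow> 0) \<and>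
      (\<forall>n. x n \<in> A) \<and> (\<forall>m. (\<lambda>n. blinfun_apply (f m) (x n)) \<longlonglongrightarrow> M m) \<and> M \<longlonglongrightarrow> L}"
    by (intro CollectI exI[of _ 0] conjI exI[of _ "\<lambda>_. 0"] exI[of _ "\<lambda>_. a"]) auto
  then show ?thesis
    unfolding gamma0_def
    by (intro cSup_least) (auto intro: iterated_limit_le_bs[OF \<open>bounded A\<close>])
qed

end
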